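(* Let $\alpha>0$ and let $\beta:[0,\infty)\to(0,\infty)$ be continuous. Let $S_0>0$, $I_0\ge 0$, and let $(S(t),I(t),R(t))$ be the solution of $$\dot S=-\frac{\beta(t)SI}{S+I},\qquad \dot I=\frac{\beta(t)SI}{S+I}-\alpha I,\qquad \dot R=\alpha I$$ with $S(0)=S_0$, $I(0)=I_0$. Then, for $t\ge 0$, $$\frac{I(t)}{S(t)}=y(t):=\frac{I_0}{S_0}\exp\left(\int_0^t(\beta(s)-\alpha)\,ds\right),$$ $$S(t)=S_0\exp\left(-\int_0^t\frac{\beta(s)y(s)}{1+y(s)}\,ds\right),\qquad I(t)=S(t)\,y(t).$$
   Context: Modified SIR epidemiological model with constant recovery rate $\alpha$ and time-dependent transmission rate $\beta(t)$; $S,I,R$ are fractions of susceptible, infective and removed individuals. *)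

theory Defs
  imports "HOL-Analysis.Analysis"
begin

definition sir_y :: "real \<Rightarrow> (real \<Rightarrow> real) \<Rightarrow> real \<Rightarrow> real \<Rightarrow> real \<Rightarrow> real" where
  "sir_y \<alpha> \<beta> S0 I0 t = I0 / S0 * exp (integral {0..t} (\<lambda>s. \<beta> s - \<alpha>))"

end

theory Submission
  imports Defs
begin

text \<open>
  The ratio y = I/S satisfies the linear equation y' = (\<beta> - \<alpha>) y, since the incidence
  term \<beta> S I/(S + I) enters S' and I' with opposite signs. Since S is not known a priori
  to stay nonzero, we do not differentiate I/S directly: instead Q = I - y S satisfies
  the linear equation Q' = (\<beta> S/(S + I) - \<alpha>) Q with Q(0) = 0, hence Q = 0. Then
  S + I = (1 + y) S turns the equation for S into S' = -(\<beta> y/(1 + y)) S, which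
  integrates explicitly.
\<close>

lemma has_real_derivative_integral_atLeast:
  fixes f :: "real \<Rightarrow> real"
  assumes "continuous_on {a..} f" and "x \<ge> a"
  shows "((\<lambda>u. integral {a..u} f) has_real_derivative f x) (at x within {a..})"
proof -
  have "continuous_on {a..x+1} f"
    using assms(1) by (rule continuous_on_subset) auto
  then have "((\<lambda>u. integral {a..u} f) has_real_derivative f x) (at x within {a..x+1})"
    using assms(2) by (intro integral_has_real_derivative) auto
  moreover have "at x within {a..x+1} = at x within {a..}"
    by (rule at_within_nhd[where S = "{..<x+1}"]) auto
  ultimately show ?thesis by simp
qed

lemma linear_ode_eq_exp_integral:
  fixes f c :: "real \<Rightarrow> real"
  assumes c_cont: "continuous_on {a..} c"
    and f_deriv: "\<And>x. x \<ge> a \<Longrightarrow> (f has_real_derivative c x * f x) (at x within {a..})"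
    and "x \<ge> a"
  shows "f x = f a * exp (integral {a..x} c)"
proof -
  define g where "g u = f u * exp (- integral {a..u} c)" for u
  have "(g has_real_derivative 0) (at u within {a..})" if "u \<in> {a..}" for u
  proof -
    have "(g has_real_derivative c u * f u * exp (- integral {a..u} c)
        + f u * (exp (- integral {a..u} c) * - c u)) (at u within {a..})"
      unfolding g_def using that f_deriv has_real_derivative_integral_atLeast[OF c_cont]
      by (auto intro!: derivative_eq_intros)
    then show ?thesis by (simp add: algebra_simps)
  qed
  then obtain k where "\<forall>u\<in>{a..}. g u = k"
    using has_field_derivative_zero_constant[of "{a..}" g] by auto
  then have "g x = g a" using \<open>x \<ge> a\<close> by simp
  then show ?thesis by (simp add: g_def exp_minus field_simps)
qed

lemma sir_y_0: "sir_y \<alpha> \<beta> S0 I0 0 = I0 / S0"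
  by (simp add: sir_y_def)

lemma sir_y_nonneg: "S0 > 0 \<Longrightarrow> I0 \<ge> 0 \<Longrightarrow> sir_y \<alpha> \<beta> S0 I0 t \<ge> 0"
  by (simp add: sir_y_def)

lemma sir_y_has_real_derivative:
  assumes "continuous_on {0..} \<beta>" and "t \<ge> 0"
  shows "(sir_y \<alpha> \<beta> S0 I0 has_real_derivative (\<beta> t - \<alpha>) * sir_y \<alpha> \<beta> S0 I0 t)
    (at t within {0..})"
proof -
  have "continuous_on {0..} (\<lambda>s. \<beta> s - \<alpha>)"
    using assms(1) by (intro continuous_intros)
  from has_real_derivative_integral_atLeast[OF this assms(2)]
  have "((\<lambda>u. exp (integral {0..u} (\<lambda>s. \<beta> s - \<alpha>))) has_real_derivative
      exp (integral {0..t} (\<lambda>s. \<beta> s - \<alpha>)) * (\<beta> t - \<alpha>)) (at t within {0..})"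
    by (rule DERIV_chain2[OF DERIV_exp])
  from DERIV_cmult[OF this, of "I0 / S0"] show ?thesis
    unfolding sir_y_def[abs_def] by (simp add: ac_simps)
qed

lemma sir_y_continuous_on: "continuous_on {0..} \<beta> \<Longrightarrow> continuous_on {0..} (sir_y \<alpha> \<beta> S0 I0)"
  by (rule DERIV_continuous_on[OF sir_y_has_real_derivative]) auto

locale sir_solution =
  fixes \<alpha> :: real and \<beta> S I :: "real \<Rightarrow> real"
  assumes beta_cont: "continuous_on {0..} \<beta>"
    and defined: "\<And>t. t \<ge> 0 \<Longrightarrow> S t + I t \<noteq> 0"
    and dS: "\<And>t. t \<ge> 0 \<Longrightarrow>
       (S has_real_derivative (- (\<beta> t * S t * I t / (S t + I t)))) (at t within {0..})"
    and dI: "\<And>t. t \<ge> 0 \<Longrightarrow>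
       (I has_real_derivative (\<beta> t * S t * I t / (S t + I t) - \<alpha> * I t)) (at t within {0..})"
begin

abbreviation y :: "real \<Rightarrow> real" where
  "y \<equiv> sir_y \<alpha> \<beta> (S 0) (I 0)"

lemma infected_eq_ratio_times_susceptible:
  assumes "S 0 \<noteq> 0" and "t \<ge> 0"
  shows "I t = y t * S t"
proof -
  define c where "c x = \<beta> x * S x / (S x + I x) - \<alpha>" for x
  define Q where "Q x = I x - y x * S x" for x
  have c_cont: "continuous_on {0..} c"
    unfolding c_def using defined
    by (intro continuous_intros beta_cont DERIV_continuous_on[OF dS] DERIV_continuous_on[OF dI])
      auto
  have "(Q has_real_derivative c x * Q x) (at x within {0..})" if x: "x \<ge> 0" for x
  proof -
    define k where "k = \<beta> x * S x / (S x + I x)"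
    have k_sum: "k * (S x + I x) = \<beta> x * S x"
      using defined[OF x] by (simp add: k_def)
    have "(Q has_real_derivative (k * I x - \<alpha> * I x)
        - ((\<beta> x - \<alpha>) * y x * S x + y x * - (k * I x))) (at x within {0..})"
      unfolding Q_def[abs_def] k_def
      using dS[OF x] dI[OF x] sir_y_has_real_derivative[OF beta_cont x]
      by (auto intro!: derivative_eq_intros)
    moreover have "(k * I x - \<alpha> * I x) - ((\<beta> x - \<alpha>) * y x * S x + y x * - (k * I x))
        = (k - \<alpha>) * Q x + y x * (k * (S x + I x) - \<beta> x * S x)"
      by (simp add: Q_def algebra_simps)
    ultimately show ?thesis
      using defined[OF x] by (simp add: k_sum c_def k_def)
  qed
  from linear_ode_eq_exp_integral[OF c_cont this \<open>t \<ge> 0\<close>]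
  have "Q t = Q 0 * exp (integral {0..t} c)" .
  moreover have "Q 0 = 0"
    using assms(1) by (simp add: Q_def sir_y_0)
  ultimately show ?thesis by (simp add: Q_def)
qed

lemma susceptible_eq_exp_integral:
  assumes S0_pos: "S 0 > 0" and I0_nonneg: "I 0 \<ge> 0" and "t \<ge> 0"
  shows "S t = S 0 * exp (- integral {0..t} (\<lambda>s. \<beta> s * y s / (1 + y s)))"
proof -
  define d where "d s = \<beta> s * y s / (1 + y s)" for s
  have y_nonneg: "y s \<ge> 0" for s
    using S0_pos I0_nonneg by (rule sir_y_nonneg)
  have d_cont: "continuous_on {0..} d"
    unfolding d_def using y_nonneg
    by (intro continuous_intros beta_cont sir_y_continuous_on) (auto simp: add_nonneg_eq_0_iff)
  have "(S has_real_derivative - d x * S x) (at x within {0..})" if x: "x \<ge> 0" for x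
  proof -
    have I_eq: "I x = y x * S x"
      using S0_pos x by (intro infected_eq_ratio_times_susceptible) auto
    have sum_eq: "S x + I x = S x * (1 + y x)"
      by (simp add: I_eq algebra_simps)
    then have "S x \<noteq> 0" "1 + y x \<noteq> 0"
      using defined[OF x] by auto
    then have "\<beta> x * S x * I x / (S x + I x) = d x * S x"
      unfolding sum_eq by (simp add: I_eq d_def mult_ac)
    then show ?thesis using dS[OF x] by simp
  qed
  from linear_ode_eq_exp_integral[OF continuous_on_minus[OF d_cont] this \<open>t \<ge> 0\<close>]
  have "S t = S 0 * exp (integral {0..t} (\<lambda>s. - d s))" .
  moreover have "d integrable_on {0..t}"
    by (rule integrable_continuous_real, rule continuous_on_subset[OF d_cont]) auto
  ultimately show ?thesis by (simp add: d_def)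
qed

end

theorem mainTheorem4:
  fixes \<alpha> S0 I0 :: real and \<beta> S I R :: "real \<Rightarrow> real"
  assumes alpha_pos: "\<alpha> > 0"
    and beta_cont: "continuous_on {0..} \<beta>"
    and beta_pos: "\<And>t. t \<ge> 0 \<Longrightarrow> \<beta> t > 0"
    and S0_pos: "S0 > 0" and I0_nonneg: "I0 \<ge> 0"
    and init: "S 0 = S0" "I 0 = I0"
    and defined: "\<And>t. t \<ge> 0 \<Longrightarrow> S t + I t \<noteq> 0"
    and dS: "\<And>t. t \<ge> 0 \<Longrightarrow>
       (S has_real_derivative (- (\<beta> t * S t * I t / (S t + I t)))) (at t within {0..})"
    and dI: "\<And>t. t \<ge> 0 \<Longrightarrow>
       (I has_real_derivative (\<beta> t * S t * I t / (S t + I t) - \<alpha> * I t)) (at t within {0..})"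
    and dR: "\<And>t. t \<ge> 0 \<Longrightarrow>
       (R has_real_derivative (\<alpha> * I t)) (at t within {0..})"
  shows "\<forall>t\<ge>0.
     I t / S t = sir_y \<alpha> \<beta> S0 I0 t \<and>
     S t = S0 * exp (- integral {0..t}
              (\<lambda>s. \<beta> s * sir_y \<alpha> \<beta> S0 I0 s / (1 + sir_y \<alpha> \<beta> S0 I0 s))) \<and>
     I t = S t * sir_y \<alpha> \<beta> S0 I0 t"
proof (intro allI impI conjI)
  fix t :: real
  assume t: "t \<ge> 0"
  interpret sir_solution \<alpha> \<beta> S I
    using beta_cont defined dS dI by unfold_locales
  show S_eq: "S t = S0 * exp (- integral {0..t}
      (\<lambda>s. \<beta> s * sir_y \<alpha> \<beta> S0 I0 s / (1 + sir_y \<alpha> \<beta> S0 I0 s)))"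
    using susceptible_eq_exp_integral[OF _ _ t] S0_pos I0_nonneg init by simp
  show I_eq: "I t = S t * sir_y \<alpha> \<beta> S0 I0 t"
    using infected_eq_ratio_times_susceptible[OF _ t] S0_pos init by (simp add: mult.commute)
  show "I t / S t = sir_y \<alpha> \<beta> S0 I0 t"
    using I_eq S_eq S0_pos by simp
qed

end
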